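(* Let $A$ be an $n\times n$ complex matrix with eigenvalues, multiplicities, $P_i$, $N_i$, $B(z)$ and $q_i$ as in the context. Then for every $i\in\{1,\dots,m\}$ and every integer $0\le s\le n_i-1$, $$\frac{d^{s}B(z)}{dz^{s}}\Big|_{z=\lambda_i}= s!\,N_i^{\,n_i-1-s}\,q_i(\lambda_i\mathbb{1}+N_i)\,P_i .$$ In particular, $$\frac{d^{n_i-1}B(z)}{dz^{n_i-1}}\Big|_{z=\lambda_i}=(n_i-1)!\,\prod_{j\ne i}(N_i+(\lambda_i-\lambda_j)\mathbb{1})^{n_j}\,P_i .$$
   Context: For an $n\times n$ complex matrix $A$ with distinct eigenvalues $\lambda_1,\dots,\lambda_m$ and algebraic multiplicities $n_1,\dots,n_m$, let $W_i=\ker(A-\lambda_i\mathbb{1})^{n_i}$ be the generalized eigenspace of $\lambda_i$, so $\mathbb{C}^n=\bigoplus_i W_i$. Let $P_i$ be the projection onto $W_i$ along $\bigoplus_{j\ne i}W_j$, and let $N_i=(A-\lambda_i\mathbb{1})P_i$ (a nilpotent matrix commuting with $P_i$, with $N_i^{n_i}=0$). Let $p(z)=\det(z\mathbb{1}-A)=\prod_{j=1}^m(z-\lambda_j)^{n_j}$, let $B(z)=\operatorname{Adj}(z\mathbb{1}-A)$ be the adjugate (transpose of the cofactor matrix) of $z\mathbb{1}-A$, a matrix polynomial in $z$, and let $q_i(z)=p(z)/(z-\lambda_i)^{n_i}=\prod_{j\ne i}(z-\lambda_j)^{n_j}$. For a polynomial $q$, $q(\lambda_i\mathbb{1}+N_i)$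 is the usual matrix polynomial evaluation. *)

theory Defs
  imports "Jordan_Normal_Form.Char_Poly" "Jordan_Normal_Form.Matrix_Kernel" "HOL-Analysis.Derivative"
begin

definition mat_poly_eval :: "'a :: comm_ring_1 poly \<Rightarrow> 'a mat \<Rightarrow> 'a mat" where
  "mat_poly_eval q M =
     foldr (\<lambda>c X. c \<cdot>\<^sub>m 1\<^sub>m (dim_row M) + M * X) (coeffs q) (0\<^sub>m (dim_row M) (dim_row M))"

(* ordered product of n x n matrices f x, x ranging over a finite set S
   (enumerated by some distinct list; used for commuting factors) *)
definition mat_set_prod :: "nat \<Rightarrow> ('b \<Rightarrow> 'a :: semiring_1 mat) \<Rightarrow> 'b set \<Rightarrow> 'a mat" where
  "mat_set_prod n f S = foldr (\<lambda>x X. f x * X) (SOME xs. distinct xs \<and> set xs = S) (1\<^sub>m n)"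

definition eigvals :: "complex mat \<Rightarrow> complex set" where
  "eigvals A = {lam. eigenvalue A lam}"

definition alg_mult :: "complex mat \<Rightarrow> complex \<Rightarrow> nat" where
  "alg_mult A lam = Polynomial.order lam (char_poly A)"

definition gen_eigenspace :: "complex mat \<Rightarrow> complex \<Rightarrow> complex Matrix.vec set" where
  "gen_eigenspace A lam = mat_kernel ((A - lam \<cdot>\<^sub>m 1\<^sub>m (dim_row A)) ^\<^sub>m alg_mult A lam)"

definition spec_proj :: "complex mat \<Rightarrow> complex \<Rightarrow> complex mat" where
  "spec_proj A lam = (THE P. P \<in> carrier_mat (dim_row A) (dim_row A) \<and>
      (\<forall>v \<in> gen_eigenspace A lam. P *\<^sub>v v = v) \<and>
      (\<forall>mu \<in> eigvals A - {lam}. \<forall>v \<in> gen_eigenspace A mu. P *\<^sub>v v = 0\<^sub>v (dim_row A)))"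

definition nilp_part :: "complex mat \<Rightarrow> complex \<Rightarrow> complex mat" where
  "nilp_part A lam = (A - lam \<cdot>\<^sub>m 1\<^sub>m (dim_row A)) * spec_proj A lam"

definition q_poly :: "complex mat \<Rightarrow> complex \<Rightarrow> complex poly" where
  "q_poly A lam = (\<Prod>mu \<in> eigvals A - {lam}. [:-mu, 1:] ^ alg_mult A mu)"

definition adjB :: "complex mat \<Rightarrow> complex \<Rightarrow> complex mat" where
  "adjB A z = adj_mat (z \<cdot>\<^sub>m 1\<^sub>m (dim_row A) - A)"

definition adjB_deriv :: "complex mat \<Rightarrow> nat \<Rightarrow> complex \<Rightarrow> complex mat" where
  "adjB_deriv A s z = Matrix.mat (dim_row A) (dim_row A)
     (\<lambda>(k,l). (deriv ^^ s) (\<lambda>w. adjB A w $$ (k,l)) z)"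

end

theory Submission
  imports Defs "HOL-Computational_Algebra.Field_as_Ring"
begin

text \<open>
  Let \<open>M = A - \<lambda> 1\<close> and \<open>\<chi>\<^sub>A(z) = (z - \<lambda>)\<^sup>m q(z)\<close>, so that \<open>\<chi>\<^sub>M(x) = x\<^sup>m q(x + \<lambda>)\<close>.
  Writing \<open>adj(x 1 - X) = \<Sum>\<^sub>s B\<^sub>s x\<^sup>s\<close>, the identity \<open>(x 1 - X) adj(x 1 - X) = \<chi>\<^sub>X(x) 1\<close> yields
  \<open>B\<^sub>s = X B\<^sub>s\<^sub>+\<^sub>1 + c\<^sub>s\<^sub>+\<^sub>1 1\<close>, so \<open>B\<^sub>s\<close> is the quotient of \<open>\<chi>\<^sub>X\<close> by \<open>x\<^sup>s\<^sup>+\<^sup>1\<close> evaluated at \<open>X\<close>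
  (together with \<open>X B\<^sub>0 = -c\<^sub>0 1\<close> this gives Cayley-Hamilton). As \<open>B(z) = adj((z - \<lambda>) 1 - M)\<close>, the \<open>s\<close>-th derivative
  of \<open>B\<close> at \<open>\<lambda>\<close> is \<open>s!\<close> times the \<open>s\<close>-th coefficient of \<open>adj(x 1 - M)\<close>, which for \<open>s < m\<close> is
  \<open>M\<^sup>m\<^sup>-\<^sup>1\<^sup>-\<^sup>s q(A)\<close>. Finally \<open>P = u(A) q(A)\<close> for a Bezout identity \<open>u q + v (x - \<lambda>)\<^sup>m = 1\<close>;
  \<open>P\<close> is idempotent, commutes with \<open>A\<close> and satisfies \<open>q(A) P = q(A)\<close>, which turns
  \<open>M\<^sup>j q(A)\<close> into \<open>N\<^sup>j q(\<lambda> 1 + N) P\<close> for \<open>N = M P\<close>.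
\<close>

section \<open>Evaluating polynomials at matrices\<close>

lemma one_smult_mat [simp]: "(1 :: 'a :: semiring_1) \<cdot>\<^sub>m A = A"
  by (intro eq_matI) auto

lemma smult_one_mult_mat [simp]:
  "dim_row (A :: 'a :: comm_ring_1 mat) = n \<Longrightarrow> a \<cdot>\<^sub>m 1\<^sub>m n * A = a \<cdot>\<^sub>m A"
  by (metis carrier_mat_triv left_mult_one_mat mult_smult_assoc_mat one_carrier_mat)

lemma mult_smult_one_mat [simp]:
  "dim_col (A :: 'a :: comm_ring_1 mat) = n \<Longrightarrow> A * (a \<cdot>\<^sub>m 1\<^sub>m n) = a \<cdot>\<^sub>m A"
  by (metis carrier_mat_triv mult_smult_distrib one_carrier_mat right_mult_one_mat)

lemma mat_poly_eval_0 [simp]: "mat_poly_eval 0 X = 0\<^sub>m (dim_row X) (dim_row X)"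
  by (simp add: mat_poly_eval_def)

lemma mat_poly_eval_pCons:
  assumes X: "X \<in> carrier_mat n n"
  shows "mat_poly_eval (pCons a p) X = a \<cdot>\<^sub>m 1\<^sub>m n + X * mat_poly_eval p X"
proof (cases "p = 0 \<and> a = 0")
  case True
  then show ?thesis using X by (auto simp: mat_poly_eval_def)
next
  case False
  then have "coeffs (pCons a p) = a # coeffs p" by (auto simp: cCons_def)
  then show ?thesis using X by (simp add: mat_poly_eval_def)
qed

lemma mat_poly_eval_carrier [simp]:
  "X \<in> carrier_mat n n \<Longrightarrow> mat_poly_eval p X \<in> carrier_mat n n"
  by (induction p) (auto simp: mat_poly_eval_pCons simp del: pCons_0_0)

lemma mat_poly_eval_dim [simp]:
  "X \<in> carrier_mat n n \<Longrightarrow> dim_row (mat_poly_eval p X) = n"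
  "X \<in> carrier_mat n n \<Longrightarrow> dim_col (mat_poly_eval p X) = n"
  by (metis carrier_matD mat_poly_eval_carrier)+

lemma mat_poly_eval_add:
  assumes X: "X \<in> carrier_mat n n"
  shows "mat_poly_eval (p + q) X = mat_poly_eval p X + mat_poly_eval q X"
proof (induction p q rule: poly_induct2)
  case 0
  then show ?case using X by auto
next
  case (pCons a p b q)
  have c: "mat_poly_eval p X \<in> carrier_mat n n" "mat_poly_eval q X \<in> carrier_mat n n"
    using X by auto
  show ?case
    unfolding add_pCons mat_poly_eval_pCons[OF X] pCons mult_add_distrib_mat[OF X c]
    using X c by (intro eq_matI) (auto simp: ac_simps distrib_right)
qed

lemma mat_poly_eval_smult:
  assumes X: "X \<in> carrier_mat n n"
  shows "mat_poly_eval (Polynomial.smult c p) X = c \<cdot>\<^sub>m mat_poly_eval p X"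
proof (induction p)
  case (pCons a p)
  have c: "mat_poly_eval p X \<in> carrier_mat n n" using X by auto
  show ?case
    unfolding smult_pCons mat_poly_eval_pCons[OF X] pCons(2) mult_smult_distrib[OF X c]
    using X c by (intro eq_matI) (auto simp: distrib_left)
qed (use X in auto)

lemma mat_poly_eval_const [simp]:
  "X \<in> carrier_mat n n \<Longrightarrow> mat_poly_eval [:a:] X = a \<cdot>\<^sub>m 1\<^sub>m n"
  by (simp add: mat_poly_eval_pCons)

lemma mat_poly_eval_1 [simp]: "X \<in> carrier_mat n n \<Longrightarrow> mat_poly_eval 1 X = 1\<^sub>m n"
  using mat_poly_eval_const[of X n 1] by (simp add: one_pCons)

lemma mat_poly_eval_mult:
  assumes X: "X \<in> carrier_mat n n"
  shows "mat_poly_eval (p * q) X = mat_poly_eval p X * mat_poly_eval q X"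
proof (induction p)
  case (pCons a p)
  let ?p = "mat_poly_eval p X" and ?q = "mat_poly_eval q X"
  have c: "?p \<in> carrier_mat n n" "?q \<in> carrier_mat n n" using X by auto
  have "mat_poly_eval (pCons a p * q) X = a \<cdot>\<^sub>m ?q + X * (?p * ?q)"
    unfolding mult_pCons_left mat_poly_eval_add[OF X] mat_poly_eval_smult[OF X]
      mat_poly_eval_pCons[OF X] pCons(2)
    using X c by (intro eq_matI) auto
  also have "\<dots> = (a \<cdot>\<^sub>m 1\<^sub>m n + X * ?p) * ?q"
    using X c by (simp add: add_mult_distrib_mat[of _ n n _ _ n] assoc_mult_mat[of _ n n _ n _ n])
  finally show ?case unfolding mat_poly_eval_pCons[OF X] .
qed (use X in auto)

lemma mat_poly_eval_power:
  "X \<in> carrier_mat n n \<Longrightarrow> mat_poly_eval (p ^ k) X = mat_poly_eval p X ^\<^sub>m k"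
  by (induction k) (simp_all add: mat_poly_eval_mult power_Suc2 del: power_Suc)

lemma mat_poly_eval_linear:
  "X \<in> carrier_mat n n \<Longrightarrow> mat_poly_eval [:a, 1:] X = a \<cdot>\<^sub>m 1\<^sub>m n + X"
  by (simp add: mat_poly_eval_pCons)

lemma mat_poly_eval_x:
  assumes X: "X \<in> carrier_mat n n"
  shows "mat_poly_eval [:0, 1:] X = X"
  unfolding mat_poly_eval_linear[OF X] using X by (intro eq_matI) auto

lemma mat_poly_eval_monom:
  "X \<in> carrier_mat n n \<Longrightarrow> mat_poly_eval (monom 1 k) X = X ^\<^sub>m k"
  by (simp add: monom_altdef mat_poly_eval_power mat_poly_eval_x)

lemma mat_poly_eval_pcompose:
  assumes X: "X \<in> carrier_mat n n"
  shows "mat_poly_eval (pcompose p r) X = mat_poly_eval p (mat_poly_eval r X)"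
proof (induction p)
  case (pCons a p)
  have Y: "mat_poly_eval r X \<in> carrier_mat n n" using X by auto
  show ?case
    unfolding pcompose_pCons mat_poly_eval_add[OF X] mat_poly_eval_mult[OF X]
      mat_poly_eval_pCons[OF Y] pCons(2)
    using X by simp
qed (use X in auto)

lemma mat_poly_eval_prod_list:
  "X \<in> carrier_mat n n \<Longrightarrow>
    mat_poly_eval (prod_list (map g xs)) X = foldr (\<lambda>x Y. mat_poly_eval (g x) X * Y) xs (1\<^sub>m n)"
  by (induction xs) (simp_all add: mat_poly_eval_mult)

lemma mat_poly_eval_commute:
  "X \<in> carrier_mat n n \<Longrightarrow> mat_poly_eval p X * mat_poly_eval q X = mat_poly_eval q X * mat_poly_eval p X"
  by (metis mat_poly_eval_mult mult.commute)

lemma mat_poly_eval_commute_right: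
  assumes X: "X \<in> carrier_mat n n" and Y: "Y \<in> carrier_mat n n" and XY: "X * Y = Y * X"
  shows "mat_poly_eval p X * Y = Y * mat_poly_eval p X"
proof (induction p)
  case (pCons a p)
  let ?p = "mat_poly_eval p X"
  have p: "?p \<in> carrier_mat n n" using X by auto
  have "(a \<cdot>\<^sub>m 1\<^sub>m n + X * ?p) * Y = a \<cdot>\<^sub>m Y + X * (?p * Y)"
    using X Y p by (simp add: add_mult_distrib_mat[of _ n n] assoc_mult_mat[of _ n n _ n _ n])
  also have "\<dots> = a \<cdot>\<^sub>m Y + Y * (X * ?p)"
    unfolding pCons using X Y p XY by (simp add: assoc_mult_mat[of _ n n _ n _ n, symmetric])
  also have "\<dots> = Y * (a \<cdot>\<^sub>m 1\<^sub>m n + X * ?p)"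
    using X Y p
    by (simp add: mult_add_distrib_mat[OF Y smult_carrier_mat[OF one_carrier_mat] mult_carrier_mat[OF X p]])
  finally show ?case unfolding mat_poly_eval_pCons[OF X] .
qed (use X Y in auto)

section \<open>The adjugate of the characteristic matrix\<close>

definition adj_coeff :: "'a :: comm_ring_1 mat \<Rightarrow> nat \<Rightarrow> 'a mat" where
  "adj_coeff X s = Matrix.mat (dim_row X) (dim_row X)
     (\<lambda>(i, j). coeff (adj_mat (char_poly_matrix X) $$ (i, j)) s)"

lemma adj_coeff_dim [simp]:
  "dim_row (adj_coeff X s) = dim_row X" "dim_col (adj_coeff X s) = dim_row X"
  by (simp_all add: adj_coeff_def)

lemma adj_coeff_carrier [simp]: "X \<in> carrier_mat n n \<Longrightarrow> adj_coeff X s \<in> carrier_mat n n"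
  by (simp add: adj_coeff_def)

lemma index_adj_coeff [simp]:
  "i < dim_row X \<Longrightarrow> j < dim_row X \<Longrightarrow>
    adj_coeff X s $$ (i, j) = coeff (adj_mat (char_poly_matrix X) $$ (i, j)) s"
  by (simp add: adj_coeff_def)

lemma index_mult_mat_sum:
  assumes "A \<in> carrier_mat n k" and "B \<in> carrier_mat k m" and "i < n" and "j < m"
  shows "(A * B) $$ (i, j) = (\<Sum>l<k. A $$ (i, l) * B $$ (l, j))"
  using assms by (auto simp: scalar_prod_def lessThan_atLeast0 intro!: sum.cong)

text \<open>Comparing the coefficients of \<open>x\<^sup>s\<close> in \<open>(x 1 - X) adj(x 1 - X) = \<chi>\<^sub>X(x) 1\<close>.\<close>

lemma coeff_char_poly_matrix_mult_adj:
  fixes X :: "'a :: comm_ring_1 mat"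
  assumes X: "X \<in> carrier_mat n n" and i: "i < n" and j: "j < n"
  defines "B \<equiv> adj_mat (char_poly_matrix X)"
  shows "(case s of 0 \<Rightarrow> 0 | Suc t \<Rightarrow> coeff (B $$ (i, j)) t)
         = (\<Sum>k<n. X $$ (i, k) * coeff (B $$ (k, j)) s) + (if i = j then coeff (char_poly X) s else 0)"
proof -
  let ?C = "char_poly_matrix X"
  have C: "?C \<in> carrier_mat n n" using X by simp
  have B: "B \<in> carrier_mat n n" unfolding B_def using adj_mat(1)[OF C] .
  have "(?C * B) $$ (i, j) = (if i = j then char_poly X else 0)"
    using adj_mat(2)[OF C] i j unfolding B_def char_poly_def by simp
  moreover have "(?C * B) $$ (i, j) = (\<Sum>k<n. ?C $$ (i, k) * B $$ (k, j))"
    by (rule index_mult_mat_sum[OF C B i j])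
  also have "\<dots> = (\<Sum>k<n. (if k = i then [:0, 1:] * B $$ (k, j) else 0)
                         - [:X $$ (i, k):] * B $$ (k, j))"
    by (rule sum.cong) (use X i in \<open>auto simp: char_poly_matrix_def left_diff_distrib\<close>)
  also have "\<dots> = [:0, 1:] * B $$ (i, j) - (\<Sum>k<n. [:X $$ (i, k):] * B $$ (k, j))"
    using i by (simp add: sum_subtractf)
  ultimately have "[:0, 1:] * B $$ (i, j)
      = (\<Sum>k<n. [:X $$ (i, k):] * B $$ (k, j)) + (if i = j then char_poly X else 0)"
    by (simp add: diff_eq_eq add.commute)
  from arg_cong[OF this, of "\<lambda>p. coeff p s"] show ?thesis
    by (auto simp: coeff_sum mult_pCons_left split: nat.split if_splits)
qed

lemma index_mult_adj_coeff:
  assumes X: "X \<in> carrier_mat n n" and i: "i < n" and j: "j < n"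
  shows "(X * adj_coeff X s) $$ (i, j)
    = (\<Sum>k<n. X $$ (i, k) * coeff (adj_mat (char_poly_matrix X) $$ (k, j)) s)"
  unfolding index_mult_mat_sum[OF X adj_coeff_carrier[OF X] i j]
  by (rule sum.cong) (use X j in auto)

lemma adj_coeff_Suc:
  fixes X :: "'a :: comm_ring_1 mat"
  assumes X: "X \<in> carrier_mat n n"
  shows "adj_coeff X s = X * adj_coeff X (Suc s) + coeff (char_poly X) (Suc s) \<cdot>\<^sub>m 1\<^sub>m n"
proof (rule eq_matI)
  fix i j
  assume "i < dim_row (X * adj_coeff X (Suc s) + coeff (char_poly X) (Suc s) \<cdot>\<^sub>m 1\<^sub>m n)"
    and "j < dim_col (X * adj_coeff X (Suc s) + coeff (char_poly X) (Suc s) \<cdot>\<^sub>m 1\<^sub>m n)"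
  then have i: "i < n" and j: "j < n" using X by auto
  show "adj_coeff X s $$ (i, j)
      = (X * adj_coeff X (Suc s) + coeff (char_poly X) (Suc s) \<cdot>\<^sub>m 1\<^sub>m n) $$ (i, j)"
    using coeff_char_poly_matrix_mult_adj[OF X i j, of "Suc s"] X i j
    by (simp add: index_mult_adj_coeff[OF X i j])
qed (use X in auto)

lemma adj_coeff_0:
  fixes X :: "'a :: comm_ring_1 mat"
  assumes X: "X \<in> carrier_mat n n"
  shows "X * adj_coeff X 0 = - coeff (char_poly X) 0 \<cdot>\<^sub>m 1\<^sub>m n"
proof (rule eq_matI)
  fix i j
  assume "i < dim_row (- coeff (char_poly X) 0 \<cdot>\<^sub>m 1\<^sub>m n)"
    and "j < dim_col (- coeff (char_poly X) 0 \<cdot>\<^sub>m 1\<^sub>m n)"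
  then have i: "i < n" and j: "j < n" by auto
  show "(X * adj_coeff X 0) $$ (i, j) = (- coeff (char_poly X) 0 \<cdot>\<^sub>m 1\<^sub>m n) $$ (i, j)"
    using coeff_char_poly_matrix_mult_adj[OF X i j, of 0] X i j
    by (auto simp: index_mult_adj_coeff[OF X i j] eq_neg_iff_add_eq_0 split: if_splits)
qed (use X in auto)

lemma adj_coeff_eventually_0:
  fixes X :: "'a :: comm_ring_1 mat"
  assumes X: "X \<in> carrier_mat n n"
  shows "\<exists>K. \<forall>s\<ge>K. adj_coeff X s = 0\<^sub>m n n"
proof (intro exI allI impI)
  let ?deg = "\<lambda>i j. degree (adj_mat (char_poly_matrix X) $$ (i, j))"
  fix s assume s: "Suc (\<Sum>i<n. \<Sum>j<n. ?deg i j) \<le> s"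
  show "adj_coeff X s = 0\<^sub>m n n"
  proof (rule eq_matI)
    fix i j assume "i < dim_row (0\<^sub>m n n :: 'a mat)" "j < dim_col (0\<^sub>m n n :: 'a mat)"
    then have i: "i < n" and j: "j < n" by auto
    have "?deg i j \<le> (\<Sum>j<n. ?deg i j)"
      using j by (intro member_le_sum) auto
    also have "\<dots> \<le> (\<Sum>i<n. \<Sum>j<n. ?deg i j)"
      using i by (intro member_le_sum[where f = "\<lambda>i. \<Sum>j<n. ?deg i j"]) auto
    finally show "adj_coeff X s $$ (i, j) = 0\<^sub>m n n $$ (i, j)"
      using X i j s by (simp add: coeff_eq_0)
  qed (use X in auto)
qed

lemma poly_shift_pCons_coeff: "poly_shift k p = pCons (coeff p k) (poly_shift (Suc k) p)"
  by (rule poly_eqI) (auto simp: coeff_poly_shift coeff_pCons split: nat.split)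

text \<open>Both sides obey the recurrence \<open>B\<^sub>s = X B\<^sub>s\<^sub>+\<^sub>1 + c\<^sub>s\<^sub>+\<^sub>1 1\<close> and vanish for large \<open>s\<close>.\<close>

lemma adj_coeff_eq_mat_poly_eval:
  fixes X :: "'a :: comm_ring_1 mat"
  assumes X: "X \<in> carrier_mat n n"
  shows "adj_coeff X s = mat_poly_eval (poly_shift (Suc s) (char_poly X)) X"
proof -
  obtain K where K: "\<And>s. s \<ge> K \<Longrightarrow> adj_coeff X s = 0\<^sub>m n n"
    using adj_coeff_eventually_0[OF X] by blast
  have "adj_coeff X s = mat_poly_eval (poly_shift (Suc s) (char_poly X)) X"
    if "max K n \<le> s + j" for j
    using that
  proof (induction j arbitrary: s)
    case 0
    have "poly_shift (Suc s) (char_poly X) = 0"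
      using 0 degree_monic_char_poly[OF X]
      by (intro poly_eqI) (simp add: coeff_poly_shift coeff_eq_0)
    then show ?case using 0 K X by simp
  next
    case (Suc j)
    let ?c = "coeff (char_poly X) (Suc s)"
    have "adj_coeff X s = X * adj_coeff X (Suc s) + ?c \<cdot>\<^sub>m 1\<^sub>m n"
      by (rule adj_coeff_Suc[OF X])
    also have "\<dots> = X * mat_poly_eval (poly_shift (Suc (Suc s)) (char_poly X)) X + ?c \<cdot>\<^sub>m 1\<^sub>m n"
      using Suc by simp
    also have "\<dots> = mat_poly_eval (pCons ?c (poly_shift (Suc (Suc s)) (char_poly X))) X"
      using X by (simp add: mat_poly_eval_pCons comm_add_mat[of _ n n])
    finally show ?case by (simp flip: poly_shift_pCons_coeff)
  qed
  then show ?thesis by (meson le_add2)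
qed

theorem cayley_hamilton:
  fixes X :: "'a :: comm_ring_1 mat"
  assumes X: "X \<in> carrier_mat n n"
  shows "mat_poly_eval (char_poly X) X = 0\<^sub>m n n"
proof -
  have e: "char_poly X = pCons (coeff (char_poly X) 0) (poly_shift 1 (char_poly X))"
    using poly_shift_pCons_coeff[of 0] by simp
  have "mat_poly_eval (char_poly X) X = coeff (char_poly X) 0 \<cdot>\<^sub>m 1\<^sub>m n + X * adj_coeff X 0"
    by (subst e) (simp add: mat_poly_eval_pCons[OF X] adj_coeff_eq_mat_poly_eval[OF X])
  also have "\<dots> = 0\<^sub>m n n"
    unfolding adj_coeff_0[OF X] by (rule eq_matI) auto
  finally show ?thesis .
qed

lemma adjB_entry_eq_poly:
  fixes A :: "complex mat"
  assumes A: "A \<in> carrier_mat n n" and k: "k < n" and l: "l < n"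
  shows "adjB A z $$ (k, l) = poly (adj_mat (char_poly_matrix (A - c \<cdot>\<^sub>m 1\<^sub>m n)) $$ (k, l)) (z - c)"
proof -
  let ?C = "char_poly_matrix (A - c \<cdot>\<^sub>m 1\<^sub>m n)"
  let ?Z = "z \<cdot>\<^sub>m 1\<^sub>m n - A"
  have C: "?C \<in> carrier_mat n n" and Z: "?Z \<in> carrier_mat n n"
    using A by (auto simp: minus_carrier_mat)
  have "poly (det (mat_delete ?C l k)) (z - c) = det (mat_delete ?Z l k)"
    by (rule poly_det_cong[OF mat_delete_carrier[OF Z] mat_delete_carrier[OF C]])
      (use A in \<open>auto simp: mat_delete_def char_poly_matrix_def\<close>)
  then show ?thesis
    using A C k l by (simp add: adjB_def adj_mat_def cofactor_def)
qed

lemma higher_deriv_poly_shift: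
  "(deriv ^^ s) (\<lambda>w. poly p (w - c)) = (\<lambda>w. poly ((pderiv ^^ s) p) (w - c))" for c :: complex
proof (induction s)
  case (Suc s)
  have "((\<lambda>w. poly q (w - c)) has_field_derivative poly (pderiv q) (w - c) * 1) (at w)" for q w
    by (rule DERIV_chain2[OF poly_DERIV]) (auto intro!: derivative_eq_intros)
  then have "deriv (\<lambda>w. poly q (w - c)) w = poly (pderiv q) (w - c)" for q w
    by (simp add: DERIV_imp_deriv)
  then show ?case using Suc by auto
qed simp

lemma adjB_deriv_eq_adj_coeff:
  fixes A :: "complex mat"
  assumes A: "A \<in> carrier_mat n n"
  shows "adjB_deriv A s c = of_nat (fact s) \<cdot>\<^sub>m adj_coeff (A - c \<cdot>\<^sub>m 1\<^sub>m n) s"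
  using A
  by (intro eq_matI)
    (auto simp: adjB_deriv_def adjB_entry_eq_poly[OF A, where c = c] higher_deriv_poly_shift poly_0_coeff_0
      coeff_higher_pderiv simp flip: pochhammer_fact)

section \<open>Factoring the characteristic polynomial\<close>

lemma eigvals_eq_roots: "A \<in> carrier_mat n n \<Longrightarrow> eigvals A = {z. poly (char_poly A) z = 0}"
  unfolding eigvals_def using eigenvalue_root_char_poly by blast

lemma char_poly_nonzero: "A \<in> carrier_mat n n \<Longrightarrow> char_poly A \<noteq> 0"
  by (metis degree_monic_char_poly leading_coeff_0_iff zero_neq_one)

lemma finite_eigvals: "A \<in> carrier_mat n n \<Longrightarrow> finite (eigvals A)"
  unfolding eigvals_eq_roots by (rule poly_roots_finite[OF char_poly_nonzero])

lemma alg_mult_pos: "A \<in> carrier_mat n n \<Longrightarrow> lam \<in> eigvals A \<Longrightarrow> 0 < alg_mult A lam"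
  unfolding eigvals_eq_roots alg_mult_def using char_poly_nonzero order_root by blast

lemma char_poly_eq_prod_eigvals:
  "A \<in> carrier_mat n n \<Longrightarrow> char_poly A = (\<Prod>mu\<in>eigvals A. [:-mu, 1:] ^ alg_mult A mu)"
  using complex_poly_decompose[of "char_poly A"] degree_monic_char_poly[of A n]
  by (simp add: eigvals_eq_roots alg_mult_def)

text \<open>No eigenvalue hypothesis is needed: otherwise \<open>alg_mult A lam = 0\<close>.\<close>

lemma char_poly_eq_mult_q_poly:
  assumes A: "A \<in> carrier_mat n n"
  shows "char_poly A = [:-lam, 1:] ^ alg_mult A lam * q_poly A lam"
proof (cases "lam \<in> eigvals A")
  case True
  show ?thesis
    unfolding char_poly_eq_prod_eigvals[OF A] q_poly_def
    by (rule prod.remove[OF finite_eigvals[OF A] True])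
next
  case False
  then have "alg_mult A lam = 0"
    by (simp add: alg_mult_def order_0I eigvals_eq_roots[OF A])
  moreover have "eigvals A - {lam} = eigvals A"
    using False by blast
  ultimately show ?thesis
    unfolding char_poly_eq_prod_eigvals[OF A] q_poly_def by simp
qed

lemma power_dvd_q_poly:
  "A \<in> carrier_mat n n \<Longrightarrow> mu \<in> eigvals A - {lam} \<Longrightarrow> [:-mu, 1:] ^ alg_mult A mu dvd q_poly A lam"
  unfolding q_poly_def by (rule dvd_prodI) (simp_all add: finite_eigvals)

lemma coprime_q_poly:
  assumes A: "A \<in> carrier_mat n n"
  shows "coprime (q_poly A lam) ([:-lam, 1:] ^ alg_mult A lam)"
proof (rule prime_elem_imp_power_coprime)
  show "prime_elem [:-lam, 1:]"
    by (rule prime_elem_linear_field_poly) simp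
  show "\<not> [:-lam, 1:] dvd q_poly A lam"
    by (simp add: poly_eq_0_iff_dvd[symmetric] q_poly_def poly_prod finite_eigvals[OF A])
qed

lemma poly_char_poly_diff_smult_one:
  fixes A :: "complex mat"
  assumes A: "A \<in> carrier_mat n n"
  shows "poly (char_poly (A - c \<cdot>\<^sub>m 1\<^sub>m n)) t = poly (char_poly A) (t + c)"
proof -
  have "char_matrix (A - c \<cdot>\<^sub>m 1\<^sub>m n) t = char_matrix A (t + c)"
    using A by (intro eq_matI) (auto simp: char_matrix_def)
  moreover have "A - c \<cdot>\<^sub>m 1\<^sub>m n \<in> carrier_mat n n"
    using A by (simp add: minus_carrier_mat)
  ultimately show ?thesis
    by (simp add: char_poly_matrix[OF A] char_poly_matrix[of "A - c \<cdot>\<^sub>m 1\<^sub>m n" n])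
qed

lemma poly_shift_monom_mult:
  "k \<le> m \<Longrightarrow> poly_shift k (monom c m * p) = monom c (m - k) * p"
  by (rule poly_eqI) (auto simp: coeff_poly_shift coeff_monom_mult)

text \<open>With \<open>M = A - lam 1\<close> and \<open>\<chi>\<^sub>M(x) = x\<^sup>m q(x + lam)\<close>, the Horner polynomials of \<open>\<chi>\<^sub>M\<close>
  below degree \<open>m\<close> are \<open>x\<^sup>m\<^sup>-\<^sup>1\<^sup>-\<^sup>s q(x + lam)\<close>.\<close>

lemma adj_coeff_diff_eigval:
  fixes A :: "complex mat"
  assumes A: "A \<in> carrier_mat n n" and s: "s < alg_mult A lam"
  shows "adj_coeff (A - lam \<cdot>\<^sub>m 1\<^sub>m n) s
     = (A - lam \<cdot>\<^sub>m 1\<^sub>m n) ^\<^sub>m (alg_mult A lam - Suc s) * mat_poly_eval (q_poly A lam) A"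
proof -
  let ?M = "A - lam \<cdot>\<^sub>m 1\<^sub>m n"
  have M: "?M \<in> carrier_mat n n" using A by (simp add: minus_carrier_mat)
  have char: "char_poly ?M = monom 1 (alg_mult A lam) * (q_poly A lam \<circ>\<^sub>p [:lam, 1:])"
    by (rule poly_eq_poly_eq_iff[THEN iffD1])
      (simp add: fun_eq_iff poly_char_poly_diff_smult_one[OF A] char_poly_eq_mult_q_poly[OF A, of lam]
        poly_monom poly_pcompose add.commute)
  have lin: "mat_poly_eval [:lam, 1:] ?M = A"
    using A by (simp add: mat_poly_eval_linear[OF M]) (intro eq_matI; auto)
  show ?thesis
    unfolding adj_coeff_eq_mat_poly_eval[OF M] char poly_shift_monom_mult[OF Suc_leI[OF s]]
      mat_poly_eval_mult[OF M] mat_poly_eval_monom[OF M] mat_poly_eval_pcompose[OF M] lin ..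
qed

section \<open>Spectral projections\<close>

lemma mult_zero_vec [simp]: "A \<in> carrier_mat nr n \<Longrightarrow> A *\<^sub>v 0\<^sub>v n = 0\<^sub>v nr"
  by (intro eq_vecI) auto

lemma mat_poly_eval_eq_if_char_poly_dvd:
  fixes A :: "'a :: comm_ring_1 mat"
  assumes A: "A \<in> carrier_mat n n" and "char_poly A dvd p - r"
  shows "mat_poly_eval p A = mat_poly_eval r A"
proof -
  obtain k where "p = r + char_poly A * k"
    using assms(2) by (metis dvdE diff_add_cancel add.commute)
  then show ?thesis
    using A by (simp add: mat_poly_eval_add mat_poly_eval_mult cayley_hamilton)
qed

lemma mat_poly_eval_power_linear:
  assumes A: "A \<in> carrier_mat n n"
  shows "mat_poly_eval ([:-mu, 1:] ^ k) A = (A - mu \<cdot>\<^sub>m 1\<^sub>m n) ^\<^sub>m k"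
proof -
  have "mat_poly_eval [:-mu, 1:] A = A - mu \<cdot>\<^sub>m 1\<^sub>m n"
    unfolding mat_poly_eval_linear[OF A] using A by (intro eq_matI) auto
  then show ?thesis by (simp add: mat_poly_eval_power[OF A])
qed

lemma mem_gen_eigenspace_iff:
  assumes "A \<in> carrier_mat n n"
  shows "w \<in> gen_eigenspace A mu \<longleftrightarrow>
    w \<in> carrier_vec n \<and> (A - mu \<cdot>\<^sub>m 1\<^sub>m n) ^\<^sub>m alg_mult A mu *\<^sub>v w = 0\<^sub>v n"
  using assms by (auto simp: gen_eigenspace_def mat_kernel_def)

text \<open>The paper's \<open>P\<^sub>i\<close> is \<open>p\<^sub>i(A)\<close>, where \<open>p\<^sub>i = u q\<^sub>i\<close> comes from a Bezout identity
  \<open>u q\<^sub>i + v (x - \<lambda>\<^sub>i)^n\<^sub>i = 1\<close>.\<close>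

definition spec_proj_poly :: "complex mat \<Rightarrow> complex \<Rightarrow> complex poly" where
  "spec_proj_poly A lam =
     fst (bezout_coefficients (q_poly A lam) ([:-lam, 1:] ^ alg_mult A lam)) * q_poly A lam"

lemma q_poly_dvd_spec_proj_poly: "q_poly A lam dvd spec_proj_poly A lam"
  by (simp add: spec_proj_poly_def)

lemma power_dvd_one_minus_spec_proj_poly:
  assumes A: "A \<in> carrier_mat n n"
  shows "[:-lam, 1:] ^ alg_mult A lam dvd 1 - spec_proj_poly A lam"
proof -
  let ?q = "q_poly A lam" and ?L = "[:-lam, 1:] ^ alg_mult A lam"
  have "fst (bezout_coefficients ?q ?L) * ?q + snd (bezout_coefficients ?q ?L) * ?L = 1"
    using coprime_q_poly[OF A] by (simp add: bezout_coefficients_fst_snd coprime_imp_gcd_eq_1)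
  then have "1 - spec_proj_poly A lam = snd (bezout_coefficients ?q ?L) * ?L"
    by (simp add: spec_proj_poly_def algebra_simps)
  then show ?thesis by simp
qed

lemma char_poly_dvd_mult:
  assumes A: "A \<in> carrier_mat n n"
    and "[:-lam, 1:] ^ alg_mult A lam dvd p" and "q_poly A lam dvd r"
  shows "char_poly A dvd p * r"
  using assms by (simp add: char_poly_eq_mult_q_poly[OF A, of lam] mult_dvd_mono)

context
  fixes A :: "complex mat" and n :: nat and lam :: complex
  assumes A: "A \<in> carrier_mat n n"
begin

lemma spec_proj_poly_idem:
  "mat_poly_eval (spec_proj_poly A lam) A * mat_poly_eval (spec_proj_poly A lam) A
    = mat_poly_eval (spec_proj_poly A lam) A"
proof -
  let ?p = "spec_proj_poly A lam"
  have "char_poly A dvd (1 - ?p) * ?p"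
    by (rule char_poly_dvd_mult[OF A power_dvd_one_minus_spec_proj_poly[OF A] q_poly_dvd_spec_proj_poly])
  then have "char_poly A dvd ?p * ?p - ?p"
    by (metis dvd_minus_iff minus_diff_eq left_diff_distrib mult_1)
  then show ?thesis
    by (simp flip: mat_poly_eval_mult[OF A] add: mat_poly_eval_eq_if_char_poly_dvd[OF A])
qed

lemma q_poly_mult_spec_proj_poly:
  "mat_poly_eval (q_poly A lam) A * mat_poly_eval (spec_proj_poly A lam) A = mat_poly_eval (q_poly A lam) A"
proof -
  let ?p = "spec_proj_poly A lam" and ?q = "q_poly A lam"
  have "char_poly A dvd (1 - ?p) * ?q"
    by (rule char_poly_dvd_mult[OF A power_dvd_one_minus_spec_proj_poly[OF A] dvd_refl])
  then have "char_poly A dvd ?q * ?p - ?q"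
    by (metis dvd_minus_iff minus_diff_eq left_diff_distrib mult_1 mult.commute)
  then show ?thesis
    by (simp flip: mat_poly_eval_mult[OF A] add: mat_poly_eval_eq_if_char_poly_dvd[OF A])
qed

lemma power_mult_spec_proj_poly:
  "(A - lam \<cdot>\<^sub>m 1\<^sub>m n) ^\<^sub>m alg_mult A lam * mat_poly_eval (spec_proj_poly A lam) A = 0\<^sub>m n n"
proof -
  have "char_poly A dvd [:-lam, 1:] ^ alg_mult A lam * spec_proj_poly A lam - 0"
    using char_poly_dvd_mult[OF A dvd_refl q_poly_dvd_spec_proj_poly] by simp
  from mat_poly_eval_eq_if_char_poly_dvd[OF A this] show ?thesis
    using A by (simp add: mat_poly_eval_mult[OF A] mat_poly_eval_power_linear[OF A])
qed

lemma spec_proj_poly_on_gen_eigenspace: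
  assumes w: "w \<in> gen_eigenspace A lam"
  shows "mat_poly_eval (spec_proj_poly A lam) A *\<^sub>v w = w"
proof -
  let ?P = "mat_poly_eval (spec_proj_poly A lam) A" and ?L = "(A - lam \<cdot>\<^sub>m 1\<^sub>m n) ^\<^sub>m alg_mult A lam"
  obtain v where v: "1 - spec_proj_poly A lam = v * [:-lam, 1:] ^ alg_mult A lam"
    using power_dvd_one_minus_spec_proj_poly[OF A] by (metis dvdE mult.commute)
  have wc: "w \<in> carrier_vec n" and Lw: "?L *\<^sub>v w = 0\<^sub>v n"
    using w by (auto simp: mem_gen_eigenspace_iff[OF A])
  have V: "mat_poly_eval v A \<in> carrier_mat n n" and L: "?L \<in> carrier_mat n n"
    using A by (auto simp: minus_carrier_mat)
  have "spec_proj_poly A lam + v * [:-lam, 1:] ^ alg_mult A lam = 1"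
    by (simp flip: v)
  then have "mat_poly_eval (spec_proj_poly A lam + v * [:-lam, 1:] ^ alg_mult A lam) A = 1\<^sub>m n"
    using A by simp
  then have compl: "?P + mat_poly_eval v A * ?L = 1\<^sub>m n"
    by (simp add: mat_poly_eval_add[OF A] mat_poly_eval_mult[OF A] mat_poly_eval_power_linear[OF A])
  have P: "?P \<in> carrier_mat n n" using A by simp
  have "w = (?P + mat_poly_eval v A * ?L) *\<^sub>v w"
    unfolding compl using wc by simp
  also have "\<dots> = ?P *\<^sub>v w + mat_poly_eval v A *\<^sub>v (?L *\<^sub>v w)"
    using V L by (simp add: add_mult_distrib_mat_vec[OF P _ wc] assoc_mult_mat_vec[OF V L wc])
  finally show ?thesis
    using P V wc by (simp add: Lw)
qed

lemma spec_proj_poly_off_gen_eigenspace: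
  assumes mu: "mu \<in> eigvals A - {lam}" and w: "w \<in> gen_eigenspace A mu"
  shows "mat_poly_eval (spec_proj_poly A lam) A *\<^sub>v w = 0\<^sub>v n"
proof -
  let ?L = "(A - mu \<cdot>\<^sub>m 1\<^sub>m n) ^\<^sub>m alg_mult A mu"
  obtain r where r: "spec_proj_poly A lam = r * [:-mu, 1:] ^ alg_mult A mu"
    using dvd_trans[OF power_dvd_q_poly[OF A mu] q_poly_dvd_spec_proj_poly]
    by (metis dvdE mult.commute)
  have wc: "w \<in> carrier_vec n" and Lw: "?L *\<^sub>v w = 0\<^sub>v n"
    using w by (auto simp: mem_gen_eigenspace_iff[OF A])
  have R: "mat_poly_eval r A \<in> carrier_mat n n" and L: "?L \<in> carrier_mat n n"
    using A by (auto simp: minus_carrier_mat)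
  show ?thesis
    unfolding r mat_poly_eval_mult[OF A] mat_poly_eval_power_linear[OF A]
      assoc_mult_mat_vec[OF R L wc] Lw
    using R by simp
qed

end

lemma mult_eq_0_if_vanishes_on_gen_eigenspace:
  fixes A D Q :: "complex mat"
  assumes A: "A \<in> carrier_mat n n" and D: "D \<in> carrier_mat n n" and Q: "Q \<in> carrier_mat n n"
    and D0: "\<And>w. w \<in> gen_eigenspace A mu \<Longrightarrow> D *\<^sub>v w = 0\<^sub>v n"
    and Q0: "(A - mu \<cdot>\<^sub>m 1\<^sub>m n) ^\<^sub>m alg_mult A mu * Q = 0\<^sub>m n n"
  shows "D * Q = 0\<^sub>m n n"
proof (rule eq_matI)
  fix i j assume "i < dim_row (0\<^sub>m n n :: complex mat)" "j < dim_col (0\<^sub>m n n :: complex mat)"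
  then have i: "i < n" and j: "j < n" by auto
  have "(A - mu \<cdot>\<^sub>m 1\<^sub>m n) ^\<^sub>m alg_mult A mu *\<^sub>v col Q j = col (0\<^sub>m n n) j"
    unfolding Q0[symmetric] by (rule col_mult2[symmetric]) (use A Q j in \<open>auto simp: minus_carrier_mat\<close>)
  then have "col Q j \<in> gen_eigenspace A mu"
    using Q j by (auto simp: mem_gen_eigenspace_iff[OF A])
  then have "(D *\<^sub>v col Q j) $ i = 0"
    using D0 i by simp
  then show "(D * Q) $$ (i, j) = 0\<^sub>m n n $$ (i, j)"
    using D Q i j by simp
qed (use D Q in auto)

text \<open>Since \<open>1 - p\<^sub>\<mu>\<close> is divisible by \<open>(x - \<mu>)^n\<^sub>\<mu>\<close>, the product of all \<open>1 - p\<^sub>\<mu>\<close> is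
  divisible by \<open>\<chi>\<^sub>A\<close>, whereas right multiplication by \<open>(1 - p\<^sub>\<mu>)(A)\<close> does not change \<open>D\<close>.\<close>

lemma mat_eq_0_if_vanishes_on_gen_eigenspaces:
  fixes A D :: "complex mat"
  assumes A: "A \<in> carrier_mat n n" and D: "D \<in> carrier_mat n n"
    and D0: "\<And>mu w. mu \<in> eigvals A \<Longrightarrow> w \<in> gen_eigenspace A mu \<Longrightarrow> D *\<^sub>v w = 0\<^sub>v n"
  shows "D = 0\<^sub>m n n"
proof -
  let ?R = "\<lambda>mu. mat_poly_eval (1 - spec_proj_poly A mu) A"
  have DR: "D * ?R mu = D" if mu: "mu \<in> eigvals A" for mu
  proof -
    let ?P = "mat_poly_eval (spec_proj_poly A mu) A"
    have P: "?P \<in> carrier_mat n n" and R: "?R mu \<in> carrier_mat n n" using A by auto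
    have compl: "?P + ?R mu = 1\<^sub>m n"
      using mat_poly_eval_add[OF A, of "spec_proj_poly A mu" "1 - spec_proj_poly A mu"] A by simp
    have DP: "D * ?P = 0\<^sub>m n n"
      by (rule mult_eq_0_if_vanishes_on_gen_eigenspace[OF A D P D0[OF mu]
            power_mult_spec_proj_poly[OF A]])
    have "D = D * (?P + ?R mu)"
      using D by (simp add: compl)
    also have "\<dots> = D * ?P + D * ?R mu"
      by (rule mult_add_distrib_mat[OF D P R])
    finally show ?thesis
      using D R by (simp add: DP)
  qed
  have "D * mat_poly_eval (\<Prod>mu\<in>S. 1 - spec_proj_poly A mu) A = D"
    if "finite S" "S \<subseteq> eigvals A" for S
    using that
  proof (induction S rule: finite_induct)
    case (insert mu S)
    have R: "?R mu \<in> carrier_mat n n"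
      and S: "mat_poly_eval (\<Prod>mu\<in>S. 1 - spec_proj_poly A mu) A \<in> carrier_mat n n"
      using A by auto
    from insert show ?case
      by (simp add: mat_poly_eval_mult[OF A] assoc_mult_mat[OF D R S, symmetric] DR)
  qed (use A D in simp)
  moreover have "char_poly A dvd (\<Prod>mu\<in>eigvals A. 1 - spec_proj_poly A mu) - 0"
    unfolding char_poly_eq_prod_eigvals[OF A]
    by (simp add: prod_dvd_prod power_dvd_one_minus_spec_proj_poly[OF A])
  from mat_poly_eval_eq_if_char_poly_dvd[OF A this]
  have "mat_poly_eval (\<Prod>mu\<in>eigvals A. 1 - spec_proj_poly A mu) A = 0\<^sub>m n n"
    using A by simp
  ultimately have "D = D * 0\<^sub>m n n"
    using finite_eigvals[OF A] by (metis subset_refl)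
  then show ?thesis
    using D by simp
qed

lemma spec_proj_eq_mat_poly_eval:
  assumes A: "A \<in> carrier_mat n n"
  shows "spec_proj A lam = mat_poly_eval (spec_proj_poly A lam) A"
proof -
  let ?P = "mat_poly_eval (spec_proj_poly A lam) A"
  have P: "?P \<in> carrier_mat n n" using A by simp
  show ?thesis
    unfolding spec_proj_def carrier_matD(1)[OF A]
  proof (rule the_equality)
    show "?P \<in> carrier_mat n n \<and> (\<forall>v\<in>gen_eigenspace A lam. ?P *\<^sub>v v = v) \<and>
      (\<forall>mu\<in>eigvals A - {lam}. \<forall>v\<in>gen_eigenspace A mu. ?P *\<^sub>v v = 0\<^sub>v n)"
      using P spec_proj_poly_on_gen_eigenspace[OF A] spec_proj_poly_off_gen_eigenspace[OF A]
      by blast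
  next
    fix Y assume Y: "Y \<in> carrier_mat n n \<and> (\<forall>v\<in>gen_eigenspace A lam. Y *\<^sub>v v = v) \<and>
      (\<forall>mu\<in>eigvals A - {lam}. \<forall>v\<in>gen_eigenspace A mu. Y *\<^sub>v v = 0\<^sub>v n)"
    then have Yc: "Y \<in> carrier_mat n n" by blast
    have "Y - ?P = 0\<^sub>m n n"
    proof (rule mat_eq_0_if_vanishes_on_gen_eigenspaces[OF A])
      show "Y - ?P \<in> carrier_mat n n" using Yc P by (simp add: minus_carrier_mat)
      fix mu w assume mu: "mu \<in> eigvals A" and w: "w \<in> gen_eigenspace A mu"
      have wc: "w \<in> carrier_vec n" using w mem_gen_eigenspace_iff[OF A] by blast
      show "(Y - ?P) *\<^sub>v w = 0\<^sub>v n"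
        using Y w mu wc spec_proj_poly_on_gen_eigenspace[OF A w]
          spec_proj_poly_off_gen_eigenspace[OF A _ w]
        by (cases "mu = lam") (simp_all add: minus_mult_distrib_mat_vec[OF Yc P wc])
    qed
    show "Y = ?P"
    proof (rule eq_matI)
      fix i j assume "i < dim_row ?P" "j < dim_col ?P"
      then have "i < n" "j < n" using P by auto
      then have "(Y - ?P) $$ (i, j) = 0"
        by (simp add: \<open>Y - ?P = 0\<^sub>m n n\<close>)
      then show "Y $$ (i, j) = ?P $$ (i, j)"
        using Yc P \<open>i < n\<close> \<open>j < n\<close> by simp
    qed (use Yc P in auto)
  qed
qed

section \<open>Passing to the nilpotent part\<close>

lemma power_mult_idem_commute:
  fixes M P :: "'a :: comm_ring_1 mat"
  assumes M: "M \<in> carrier_mat n n" and P: "P \<in> carrier_mat n n"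
    and PM: "P * M = M * P" and PP: "P * P = P"
  shows "(M * P) ^\<^sub>m j * P = M ^\<^sub>m j * P"
proof (induction j)
  case (Suc j)
  have Nj: "(M * P) ^\<^sub>m j \<in> carrier_mat n n" and Mj: "M ^\<^sub>m j \<in> carrier_mat n n"
    using M P by auto
  have "(M * P) ^\<^sub>m Suc j * P = (M * P) ^\<^sub>m j * P * M"
    using M P Nj PM PP by (simp add: assoc_mult_mat[of _ n n _ n _ n])
  also have "\<dots> = M ^\<^sub>m Suc j * P"
    using M P Mj PM by (simp add: Suc assoc_mult_mat[of _ n n _ n _ n])
  finally show ?case .
qed (use P in simp)

lemma mat_poly_eval_mult_right_cong:
  fixes Y Z P :: "'a :: comm_ring_1 mat"
  assumes Y: "Y \<in> carrier_mat n n" and Z: "Z \<in> carrier_mat n n" and P: "P \<in> carrier_mat n n"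
    and YP: "Y * P = Z * P" and ZP: "Z * P = P * Z"
  shows "mat_poly_eval f Y * P = mat_poly_eval f Z * P"
proof (induction f)
  case (pCons a f)
  let ?y = "mat_poly_eval f Y" and ?z = "mat_poly_eval f Z"
  have y: "?y \<in> carrier_mat n n" and z: "?z \<in> carrier_mat n n" using Y Z by auto
  have zP: "?z * P = P * ?z" by (rule mat_poly_eval_commute_right[OF Z P ZP])
  have "Y * (?y * P) = Z * (?z * P)"
    using Y Z P z YP by (simp add: pCons zP assoc_mult_mat[of _ n n _ n _ n, symmetric])
  then show ?case
    using Y Z P y z
    by (simp add: mat_poly_eval_pCons add_mult_distrib_mat[of _ n n] assoc_mult_mat[of _ n n _ n _ n])
qed (use Y Z P in simp)

text \<open>With \<open>N = (A - c 1) P\<close> for an idempotent \<open>P\<close> commuting with \<open>A\<close>, the matrices \<open>c 1 + N\<close>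
  and \<open>A\<close> agree after right multiplication by \<open>P\<close>.\<close>

lemma power_mult_mat_poly_eval_proj:
  fixes A P :: "'a :: comm_ring_1 mat"
  assumes A: "A \<in> carrier_mat n n" and P: "P \<in> carrier_mat n n"
    and PA: "P * A = A * P" and PP: "P * P = P" and fP: "mat_poly_eval f A * P = mat_poly_eval f A"
  shows "((A - c \<cdot>\<^sub>m 1\<^sub>m n) * P) ^\<^sub>m j * mat_poly_eval f (c \<cdot>\<^sub>m 1\<^sub>m n + (A - c \<cdot>\<^sub>m 1\<^sub>m n) * P) * P
     = (A - c \<cdot>\<^sub>m 1\<^sub>m n) ^\<^sub>m j * mat_poly_eval f A"
proof -
  let ?M = "A - c \<cdot>\<^sub>m 1\<^sub>m n"
  let ?N = "?M * P"
  let ?Y = "c \<cdot>\<^sub>m 1\<^sub>m n + ?N"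
  let ?F = "mat_poly_eval f A"
  have M: "?M \<in> carrier_mat n n" using A by (simp add: minus_carrier_mat)
  have Y: "?Y \<in> carrier_mat n n" and F: "?F \<in> carrier_mat n n"
    and Nj: "?N ^\<^sub>m j \<in> carrier_mat n n" and Mj: "?M ^\<^sub>m j \<in> carrier_mat n n"
    using A M P by auto
  have PM: "P * ?M = ?M * P"
    using A P PA by (simp add: mult_minus_distrib_mat minus_mult_distrib_mat)
  have PF: "P * ?F = ?F" using mat_poly_eval_commute_right[OF A P PA[symmetric]] fP by simp
  have "?N * P = ?M * P"
    using assoc_mult_mat[OF M P P] PP by simp
  then have "?Y * P = c \<cdot>\<^sub>m 1\<^sub>m n * P + ?M * P"
    using M P by (simp add: add_mult_distrib_mat[of _ n n])
  also have "\<dots> = (c \<cdot>\<^sub>m 1\<^sub>m n + ?M) * P"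
    using M P by (simp add: add_mult_distrib_mat[of _ n n])
  also have "c \<cdot>\<^sub>m 1\<^sub>m n + ?M = A"
    using A by (intro eq_matI) auto
  finally have "?Y * P = A * P" .
  then have YF: "mat_poly_eval f ?Y * P = ?F * P"
    by (rule mat_poly_eval_mult_right_cong[OF Y A P _ PA[symmetric]])
  have "?N ^\<^sub>m j * mat_poly_eval f ?Y * P = ?N ^\<^sub>m j * P * ?F"
    using Nj Y P F by (simp add: assoc_mult_mat[of _ n n _ n _ n] YF fP PF)
  also have "\<dots> = ?M ^\<^sub>m j * ?F"
    using Mj P F by (simp add: power_mult_idem_commute[OF M P PM PP] assoc_mult_mat[of _ n n _ n _ n] PF)
  finally show ?thesis .
qed

lemma mat_set_prod_eq_mat_poly_eval:
  fixes A N :: "complex mat"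
  assumes A: "A \<in> carrier_mat n n" and N: "N \<in> carrier_mat n n"
  shows "mat_set_prod n (\<lambda>mu. (N + (lam - mu) \<cdot>\<^sub>m 1\<^sub>m n) ^\<^sub>m alg_mult A mu) (eigvals A - {lam})
       = mat_poly_eval (q_poly A lam) (lam \<cdot>\<^sub>m 1\<^sub>m n + N)"
proof -
  let ?Y = "lam \<cdot>\<^sub>m 1\<^sub>m n + N"
  have Y: "?Y \<in> carrier_mat n n" using N by simp
  define xs where "xs = (SOME xs. distinct xs \<and> set xs = eigvals A - {lam})"
  have "finite (eigvals A - {lam})" using finite_eigvals[OF A] by simp
  then have xs: "distinct xs \<and> set xs = eigvals A - {lam}"
    unfolding xs_def by (rule someI_ex[OF finite_distinct_list[THEN ex_forward]]) blast
  have q: "q_poly A lam = prod_list (map (\<lambda>mu. [:-mu, 1:] ^ alg_mult A mu) xs)"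
    unfolding q_poly_def xs[THEN conjunct2, symmetric]
    by (rule prod.distinct_set_conv_list[OF xs[THEN conjunct1]])
  have lin: "mat_poly_eval [:-mu, 1:] ?Y = N + (lam - mu) \<cdot>\<^sub>m 1\<^sub>m n" for mu
    unfolding mat_poly_eval_linear[OF Y] using N by (intro eq_matI) (auto simp: algebra_simps)
  show ?thesis
    unfolding mat_set_prod_def xs_def[symmetric] q mat_poly_eval_prod_list[OF Y]
      mat_poly_eval_power[OF Y] lin ..
qed

theorem theorem3:
  fixes A :: "complex mat" and n :: nat and lam :: complex
  assumes "A \<in> carrier_mat n n"
    and "lam \<in> eigvals A"
  shows "(\<forall>s < alg_mult A lam.
            adjB_deriv A s lam =
              of_nat (fact s) \<cdot>\<^sub>m
                (nilp_part A lam ^\<^sub>m (alg_mult A lam - 1 - s)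
                 * mat_poly_eval (q_poly A lam) (lam \<cdot>\<^sub>m 1\<^sub>m n + nilp_part A lam)
                 * spec_proj A lam))
       \<and> adjB_deriv A (alg_mult A lam - 1) lam =
              of_nat (fact (alg_mult A lam - 1)) \<cdot>\<^sub>m
                (mat_set_prod n
                   (\<lambda>mu. (nilp_part A lam + (lam - mu) \<cdot>\<^sub>m 1\<^sub>m n) ^\<^sub>m alg_mult A mu)
                   (eigvals A - {lam})
                 * spec_proj A lam)"
proof -
  note A = assms(1)
  let ?P = "spec_proj A lam" and ?N = "nilp_part A lam" and ?m = "alg_mult A lam"
  have P: "?P = mat_poly_eval (spec_proj_poly A lam) A"
    by (rule spec_proj_eq_mat_poly_eval[OF A])
  have N: "?N = (A - lam \<cdot>\<^sub>m 1\<^sub>m n) * ?P"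
    using A by (simp add: nilp_part_def)
  have PA: "?P * A = A * ?P"
    unfolding P using mat_poly_eval_commute[OF A, of _ "[:0, 1:]"] by (simp add: mat_poly_eval_x[OF A])
  have "?N ^\<^sub>m j * mat_poly_eval (q_poly A lam) (lam \<cdot>\<^sub>m 1\<^sub>m n + ?N) * ?P
      = (A - lam \<cdot>\<^sub>m 1\<^sub>m n) ^\<^sub>m j * mat_poly_eval (q_poly A lam) A" for j
    unfolding N
    by (rule power_mult_mat_poly_eval_proj[OF A _ PA])
      (use A in \<open>simp_all add: P spec_proj_poly_idem q_poly_mult_spec_proj_poly\<close>)
  then have derivs: "\<forall>s < ?m. adjB_deriv A s lam = of_nat (fact s) \<cdot>\<^sub>m
      (?N ^\<^sub>m (?m - 1 - s) * mat_poly_eval (q_poly A lam) (lam \<cdot>\<^sub>m 1\<^sub>m n + ?N) * ?P)"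
    by (simp add: adjB_deriv_eq_adj_coeff[OF A] adj_coeff_diff_eigval[OF A])
  have "?N \<in> carrier_mat n n"
    unfolding N P by (rule mult_carrier_mat[of _ n n]) (use A in \<open>simp_all add: minus_carrier_mat\<close>)
  with derivs show ?thesis
    using alg_mult_pos[OF assms] by (simp add: mat_set_prod_eq_mat_poly_eval[OF A])
qed

end
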